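(* Let $\alpha$ be a unit-speed curve in $\mathbb{R}^3$ with nonvanishing curvature, let $\alpha_T$ be its tangent indicatrix with arc length $s_T$ and Frenet apparatus $\{T_T,N_T,B_T,\kappa_T,\tau_T\}$, and let $\beta$ be a Mannheim-direction curve of $\alpha_T$ (an $X$-direction curve of $\alpha_T$ with $N_\beta=B_T$). Then $$\frac{\tau_T}{\kappa_T}=\mp\,\frac{1}{\dfrac{\kappa_\beta^2}{(\kappa_\beta^2+\tau_\beta^2)^{3/2}}\,\dfrac{d}{ds_T}\Big(\dfrac{\tau_\beta}{\kappa_\beta}\Big)}.$$ That is, $\tau_T/\kappa_T$ equals this reciprocal up to sign.
   Context: Let $\alpha:I\subset\mathbb{R}\to\mathbb{R}^3$ be a unit-speed curve with curvature $\kappa>0$, torsion $\tau$ and Frenet frame $\{T,N,B\}$. The tangent indicatrix of $\alpha$ is the curve $\alpha_T=T$ on the unit sphere. Its arc length is $s_T=\int\kappa\,ds$. Its Frenet apparatus is $\{T_T,N_T,B_T,\kappa_T,\tau_T\}$, with $\frac{dT_T}{ds_T}=\kappa_TN_T$, $\frac{dN_T}{ds_T}=-\kappa_TT_T+\tau_TB_T$ and $\frac{dB_T}{ds_T}=-\tau_TN_T$. Let $x,y,z$ be real functions of $s_T$ with $x^2+y^2+z^2=1$, and set $X=xT_T+yN_T+zB_T$. An integral curve $\beta$ of $X$, meaning $d\beta/ds_T=X$, is an $X$-direction curve of $\alpha_T$. It has unit speed with arc length $s_T$. It is regarded as a Frenet curve with frame $\{T_\beta=X,N_\beta,B_\beta\}$,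 curvature $\kappa_\beta>0$ and torsion $\tau_\beta$. $\beta$ is a Mannheim-direction curve of $\alpha_T$ if $N_\beta=B_T$. *)

theory Defs
  imports "HOL-Analysis.Analysis"
begin

text \<open>Frenet apparatus of a space curve, with every function expressed in terms of a common
  parameter s ranging over I.  The derivative with respect to the curve's own arc length
  sigma is encoded by the chain rule: if d sigma / ds = v s, then
  d f / d sigma = (1 / v s) * d f / d s.  So the Frenet equations
  dT/dsigma = k N, dN/dsigma = -k T + t B, dB/dsigma = -t N become the equations below.\<close>

definition frenet_wrt ::
  "real set \<Rightarrow> (real \<Rightarrow> real) \<Rightarrow> (real \<Rightarrow> real^3) \<Rightarrow> (real \<Rightarrow> real^3) \<Rightarrow> (real \<Rightarrow> real^3)
    \<Rightarrow> (real \<Rightarrow> real) \<Rightarrow> (real \<Rightarrow> real) \<Rightarrow> bool" where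
  "frenet_wrt I v T N B k t \<longleftrightarrow>
     (\<forall>s\<in>I. norm (T s) = 1 \<and> norm (N s) = 1 \<and> T s \<bullet> N s = 0 \<and> B s = cross3 (T s) (N s)
        \<and> k s > 0
        \<and> (T has_vector_derivative (v s * k s) *\<^sub>R N s) (at s)
        \<and> (N has_vector_derivative (v s) *\<^sub>R (- (k s *\<^sub>R T s) + t s *\<^sub>R B s)) (at s)
        \<and> (B has_vector_derivative (- (v s * t s)) *\<^sub>R N s) (at s))"

end

theory Submission
  imports Defs
begin

text \<open>Since \<open>N\<^sub>\<beta> = B\<^sub>T\<close>, the tangent \<open>T\<^sub>\<beta>\<close> lies in the plane of \<open>T\<^sub>T\<close> and \<open>N\<^sub>T\<close>, say
  \<open>T\<^sub>\<beta> = x T\<^sub>T + y N\<^sub>T\<close> with \<open>x\<^sup>2 + y\<^sup>2 = 1\<close>. Differentiating \<open>T\<^sub>\<beta> \<bullet> B\<^sub>T = 0\<close> and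
  \<open>B\<^sub>\<beta> \<bullet> B\<^sub>T = 0\<close> gives \<open>\<kappa>\<^sub>\<beta> = \<tau>\<^sub>T y\<close> and \<open>\<tau>\<^sub>\<beta> = \<tau>\<^sub>T x\<close>, so \<open>\<kappa>\<^sub>\<beta>\<^sup>2 + \<tau>\<^sub>\<beta>\<^sup>2 = \<tau>\<^sub>T\<^sup>2\<close>.
  The Frenet equations of \<open>\<alpha>\<^sub>T\<close> make \<open>(x, y)\<close> rotate with angular speed \<open>\<kappa>\<^sub>T\<close>, hence
  \<open>(\<tau>\<^sub>\<beta>/\<kappa>\<^sub>\<beta>)' = (x/y)' = \<kappa>\<^sub>T / y\<^sup>2\<close>, and the right-hand side of the claim collapses
  to \<open>\<plusminus>\<bar>\<tau>\<^sub>T\<bar> / \<kappa>\<^sub>T\<close>.\<close>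

lemma has_real_derivative_inner:
  assumes "(f has_vector_derivative f') (at u)" "(g has_vector_derivative g') (at u)"
  shows "((\<lambda>u. f u \<bullet> g u) has_real_derivative f' \<bullet> g u + f u \<bullet> g') (at u)"
proof -
  have "((\<lambda>u. f u \<bullet> g u) has_derivative (\<lambda>h. f u \<bullet> (h *\<^sub>R g') + (h *\<^sub>R f') \<bullet> g u)) (at u)"
    using assms unfolding has_vector_derivative_def by (intro has_derivative_inner) auto
  moreover have "(\<lambda>h. f u \<bullet> (h *\<^sub>R g') + (h *\<^sub>R f') \<bullet> g u) = (*) (f' \<bullet> g u + f u \<bullet> g')"
    by (auto simp: fun_eq_iff algebra_simps)
  ultimately show ?thesis unfolding has_field_derivative_def by simp
qed

lemma has_real_derivative_vanishing_on_open:
  assumes "(f has_real_derivative D) (at u)" "open I" "u \<in> I" "\<And>v. v \<in> I \<Longrightarrow> f v = 0"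
  shows "D = 0"
proof -
  have "((\<lambda>_. 0) has_real_derivative D) (at u)"
    using has_field_derivative_transform_within_open[OF assms(1-3)] assms(4) by auto
  then show ?thesis using DERIV_const DERIV_unique by blast
qed

lemma has_real_derivative_quotient_rotation:
  assumes "(a has_real_derivative w * b u) (at u)" "(b has_real_derivative - (w * a u)) (at u)"
    and "b u \<noteq> 0"
  shows "((\<lambda>u. a u / b u) has_real_derivative w * ((a u)\<^sup>2 + (b u)\<^sup>2) / (b u)\<^sup>2) (at u)"
proof -
  have "((\<lambda>u. a u / b u) has_real_derivative
      (w * b u * b u - a u * - (w * a u)) / (b u * b u)) (at u)"
    using DERIV_divide[OF assms] by simp
  moreover have "(w * b u * b u - a u * - (w * a u)) / (b u * b u)
      = w * ((a u)\<^sup>2 + (b u)\<^sup>2) / (b u)\<^sup>2"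
    by (simp add: power2_eq_square algebra_simps)
  ultimately show ?thesis by simp
qed

lemma cross3_cross3: "cross3 a (cross3 b c) = (a \<bullet> c) *\<^sub>R b - (a \<bullet> b) *\<^sub>R c"
  by (simp add: cross3_simps forall_3)

lemma inner_cross3_left: "cross3 a b \<bullet> c = a \<bullet> cross3 b c"
  by (simp add: cross3_simps)

lemma power2_powr_three_halves: "((x::real)\<^sup>2) powr (3/2) = \<bar>x\<bar> ^ 3"
  by (simp add: powr_half_sqrt_powr real_sqrt_unique)

lemma frenet_wrtD:
  assumes "frenet_wrt I v T N B k t" "u \<in> I"
  shows "norm (T u) = 1" "norm (N u) = 1" "T u \<bullet> N u = 0" "B u = cross3 (T u) (N u)"
    "k u > 0"
    "(T has_vector_derivative (v u * k u) *\<^sub>R N u) (at u)"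
    "(N has_vector_derivative (v u) *\<^sub>R (- (k u *\<^sub>R T u) + t u *\<^sub>R B u)) (at u)"
    "(B has_vector_derivative (- (v u * t u)) *\<^sub>R N u) (at u)"
  using assms unfolding frenet_wrt_def by blast+

lemma frenet_wrt_orthonormal:
  assumes "frenet_wrt I v T N B k t" "u \<in> I"
  shows "T u \<bullet> T u = 1" "N u \<bullet> N u = 1" "B u \<bullet> B u = 1"
    "T u \<bullet> N u = 0" "N u \<bullet> T u = 0" "T u \<bullet> B u = 0" "B u \<bullet> T u = 0"
    "N u \<bullet> B u = 0" "B u \<bullet> N u = 0"
    "cross3 (T u) (B u) = - N u" "cross3 (N u) (B u) = T u"
proof -
  note F = frenet_wrtD[OF assms]
  show TT: "T u \<bullet> T u = 1" and NN: "N u \<bullet> N u = 1"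
    using F(1,2) by (simp_all add: dot_square_norm)
  show "T u \<bullet> N u = 0" "N u \<bullet> T u = 0" using F(3) by (simp_all add: inner_commute)
  show "T u \<bullet> B u = 0" "B u \<bullet> T u = 0" "N u \<bullet> B u = 0" "B u \<bullet> N u = 0"
    unfolding F(4) by (simp_all add: dot_cross_self inner_commute)
  have "(norm (B u))\<^sup>2 + (T u \<bullet> N u)\<^sup>2 = (norm (T u) * norm (N u))\<^sup>2"
    unfolding F(4) by (rule norm_cross_dot)
  then show "B u \<bullet> B u = 1" using F(1-3) by (simp add: power2_norm_eq_inner)
  show "cross3 (T u) (B u) = - N u" "cross3 (N u) (B u) = T u"
    unfolding F(4) using TT NN F(3) by (simp_all add: cross3_cross3 inner_commute)
qed

locale mannheim_direction =
  fixes I :: "real set" and v :: "real \<Rightarrow> real"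
    and T N B :: "real \<Rightarrow> real^3" and k t :: "real \<Rightarrow> real"
    and T' N' B' :: "real \<Rightarrow> real^3" and k' t' :: "real \<Rightarrow> real"
  assumes open_domain: "open I"
    and speed_nonzero: "\<forall>u\<in>I. v u \<noteq> 0"
    and frenet: "frenet_wrt I v T N B k t"
    and frenet': "frenet_wrt I v T' N' B' k' t'"
    and normal'_eq_binormal: "\<forall>u\<in>I. N' u = B u"
begin

lemma tangent'_orthogonal_binormal: "u \<in> I \<Longrightarrow> T' u \<bullet> B u = 0"
  using frenet_wrtD(3)[OF frenet'] normal'_eq_binormal by simp

lemma binormal'_orthogonal_binormal: "u \<in> I \<Longrightarrow> B' u \<bullet> B u = 0"
  using frenet_wrtD(4)[OF frenet'] normal'_eq_binormal by (simp add: dot_cross_self)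

lemma curvature'_eq:
  assumes u: "u \<in> I"
  shows "k' u = t u * (T' u \<bullet> N u)"
proof -
  note D = frenet_wrtD[OF frenet u] and O = frenet_wrt_orthonormal[OF frenet u]
    and D' = frenet_wrtD[OF frenet' u]
  have "((\<lambda>u. T' u \<bullet> B u) has_real_derivative
      ((v u * k' u) *\<^sub>R N' u) \<bullet> B u + T' u \<bullet> ((- (v u * t u)) *\<^sub>R N u)) (at u)"
    by (rule has_real_derivative_inner[OF D'(6) D(8)])
  then have "((v u * k' u) *\<^sub>R N' u) \<bullet> B u + T' u \<bullet> ((- (v u * t u)) *\<^sub>R N u) = 0"
    using open_domain u tangent'_orthogonal_binormal by (rule has_real_derivative_vanishing_on_open)
  then have "v u * (k' u - t u * (T' u \<bullet> N u)) = 0"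
    by (simp add: O(3) normal'_eq_binormal u algebra_simps)
  then show ?thesis using speed_nonzero u by simp
qed

lemma torsion'_eq:
  assumes u: "u \<in> I"
  shows "t' u = t u * (T' u \<bullet> T u)"
proof -
  note D = frenet_wrtD[OF frenet u] and O = frenet_wrt_orthonormal[OF frenet u]
    and D' = frenet_wrtD[OF frenet' u]
  have "B' u \<bullet> N u = T' u \<bullet> cross3 (B u) (N u)"
    using D'(4) normal'_eq_binormal u by (simp add: inner_cross3_left)
  also have "\<dots> = - (T' u \<bullet> T u)"
    by (subst cross_skew) (simp add: O(11))
  finally have B'_N: "B' u \<bullet> N u = - (T' u \<bullet> T u)" .
  have "((\<lambda>u. B' u \<bullet> B u) has_real_derivative
      ((- (v u * t' u)) *\<^sub>R N' u) \<bullet> B u + B' u \<bullet> ((- (v u * t u)) *\<^sub>R N u)) (at u)"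
    by (rule has_real_derivative_inner[OF D'(8) D(8)])
  then have "((- (v u * t' u)) *\<^sub>R N' u) \<bullet> B u + B' u \<bullet> ((- (v u * t u)) *\<^sub>R N u) = 0"
    using open_domain u binormal'_orthogonal_binormal by (rule has_real_derivative_vanishing_on_open)
  then have "v u * (t u * (T' u \<bullet> T u) - t' u) = 0"
    by (simp add: O(3) B'_N normal'_eq_binormal u algebra_simps)
  then show ?thesis using speed_nonzero u by simp
qed

lemma has_real_derivative_tangent'_inner_tangent:
  assumes u: "u \<in> I"
  shows "((\<lambda>u. T' u \<bullet> T u) has_real_derivative v u * k u * (T' u \<bullet> N u)) (at u)"
proof -
  note D = frenet_wrtD[OF frenet u] and O = frenet_wrt_orthonormal[OF frenet u]
    and D' = frenet_wrtD[OF frenet' u]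
  have "((\<lambda>u. T' u \<bullet> T u) has_real_derivative
      ((v u * k' u) *\<^sub>R N' u) \<bullet> T u + T' u \<bullet> ((v u * k u) *\<^sub>R N u)) (at u)"
    by (rule has_real_derivative_inner[OF D'(6) D(6)])
  moreover have "((v u * k' u) *\<^sub>R N' u) \<bullet> T u + T' u \<bullet> ((v u * k u) *\<^sub>R N u)
      = v u * k u * (T' u \<bullet> N u)"
    by (simp add: O(7) normal'_eq_binormal u)
  ultimately show ?thesis by (simp only:)
qed

lemma has_real_derivative_tangent'_inner_normal:
  assumes u: "u \<in> I"
  shows "((\<lambda>u. T' u \<bullet> N u) has_real_derivative - (v u * k u * (T' u \<bullet> T u))) (at u)"
proof -
  note D = frenet_wrtD[OF frenet u] and O = frenet_wrt_orthonormal[OF frenet u]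
    and D' = frenet_wrtD[OF frenet' u]
  have "((\<lambda>u. T' u \<bullet> N u) has_real_derivative ((v u * k' u) *\<^sub>R N' u) \<bullet> N u
      + T' u \<bullet> ((v u) *\<^sub>R (- (k u *\<^sub>R T u) + t u *\<^sub>R B u))) (at u)"
    by (rule has_real_derivative_inner[OF D'(6) D(7)])
  moreover have "((v u * k' u) *\<^sub>R N' u) \<bullet> N u + T' u \<bullet> ((v u) *\<^sub>R (- (k u *\<^sub>R T u) + t u *\<^sub>R B u))
      = - (v u * k u * (T' u \<bullet> T u))"
    by (simp add: O(9) normal'_eq_binormal u tangent'_orthogonal_binormal[OF u] inner_diff_right)
  ultimately show ?thesis by (simp only:)
qed

lemma has_real_derivative_torsion'_over_curvature':
  assumes u: "u \<in> I"
  shows "((\<lambda>u. t' u / k' u) has_real_derivative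
      v u * k u * ((T' u \<bullet> T u)\<^sup>2 + (T' u \<bullet> N u)\<^sup>2) / (T' u \<bullet> N u)\<^sup>2) (at u)"
proof -
  have ratio: "t' w / k' w = (T' w \<bullet> T w) / (T' w \<bullet> N w)" if "w \<in> I" for w
    using curvature'_eq[OF that] torsion'_eq[OF that] frenet_wrtD(5)[OF frenet' that] by auto
  have "T' u \<bullet> N u \<noteq> 0"
    using curvature'_eq[OF u] frenet_wrtD(5)[OF frenet' u] by auto
  then have "((\<lambda>u. (T' u \<bullet> T u) / (T' u \<bullet> N u)) has_real_derivative
      v u * k u * ((T' u \<bullet> T u)\<^sup>2 + (T' u \<bullet> N u)\<^sup>2) / (T' u \<bullet> N u)\<^sup>2) (at u)"
    using has_real_derivative_tangent'_inner_tangent[OF u] has_real_derivative_tangent'_inner_normal[OF u]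
    by (intro has_real_derivative_quotient_rotation) auto
  then show ?thesis
    using has_field_derivative_transform_within_open[OF _ open_domain u] ratio by auto
qed

end

lemma mannheim_curvature_factor:
  fixes a b c \<tau> :: real
  assumes "a\<^sup>2 + b\<^sup>2 = 1" "\<tau> * b \<noteq> 0"
  shows "(\<tau> * b)\<^sup>2 / ((\<tau> * b)\<^sup>2 + (\<tau> * a)\<^sup>2) powr (3/2) * (c / b\<^sup>2) = c / \<bar>\<tau>\<bar>"
proof -
  have sum: "(\<tau> * b)\<^sup>2 + (\<tau> * a)\<^sup>2 = \<tau>\<^sup>2"
    using assms(1) by (simp add: power_mult_distrib flip: distrib_left)
  have "((\<tau> * b)\<^sup>2 + (\<tau> * a)\<^sup>2) powr (3/2) = \<tau>\<^sup>2 * \<bar>\<tau>\<bar>"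
    unfolding sum power2_powr_three_halves by (simp add: power3_eq_cube power2_eq_square abs_mult_self_eq)
  then show ?thesis
    using assms(2) by (simp add: power_mult_distrib divide_simps)
qed

theorem corollary6p4:
  fixes I :: "real set"
    and \<alpha> T N B :: "real \<Rightarrow> real^3" and \<kappa> \<tau> :: "real \<Rightarrow> real"
    and TT NT BT :: "real \<Rightarrow> real^3" and \<kappa>T \<tau>T :: "real \<Rightarrow> real"
    and x y z :: "real \<Rightarrow> real" and X :: "real \<Rightarrow> real^3"
    and \<beta> Tb Nb Bb :: "real \<Rightarrow> real^3" and \<kappa>b \<tau>b :: "real \<Rightarrow> real"
    and s :: real
  assumes I: "open I" "is_interval I"
    and alpha: "\<forall>u\<in>I. (\<alpha> has_vector_derivative T u) (at u)"
    and alpha_frenet: "frenet_wrt I (\<lambda>_. 1) T N B \<kappa> \<tau>"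
    and TT_def: "\<forall>u\<in>I. (T has_vector_derivative \<kappa> u *\<^sub>R TT u) (at u)"
    and tangent_frenet: "frenet_wrt I \<kappa> TT NT BT \<kappa>T \<tau>T"
    and xyz: "\<forall>u\<in>I. (x u)\<^sup>2 + (y u)\<^sup>2 + (z u)\<^sup>2 = 1"
    and X_def: "\<forall>u\<in>I. X u = x u *\<^sub>R TT u + y u *\<^sub>R NT u + z u *\<^sub>R BT u"
    and beta: "\<forall>u\<in>I. (\<beta> has_vector_derivative \<kappa> u *\<^sub>R X u) (at u)"
    and Tb_def: "\<forall>u\<in>I. Tb u = X u"
    and beta_frenet: "frenet_wrt I \<kappa> Tb Nb Bb \<kappa>b \<tau>b"
    and mannheim: "\<forall>u\<in>I. Nb u = BT u"
    and s: "s \<in> I"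
  shows "\<exists>D. ((\<lambda>u. \<tau>b u / \<kappa>b u) has_real_derivative \<kappa> s * D) (at s) \<and>
           (\<tau>T s / \<kappa>T s =
              1 / ((\<kappa>b s)\<^sup>2 / ((\<kappa>b s)\<^sup>2 + (\<tau>b s)\<^sup>2) powr (3/2) * D)
            \<or> \<tau>T s / \<kappa>T s =
              - (1 / ((\<kappa>b s)\<^sup>2 / ((\<kappa>b s)\<^sup>2 + (\<tau>b s)\<^sup>2) powr (3/2) * D)))"
proof -
  \<comment> \<open>The curves \<open>\<alpha>\<close> and \<open>\<beta>\<close> themselves never enter: only the two Frenet frames,
    \<open>\<kappa> > 0\<close>, the Mannheim condition and the coordinates of \<open>X\<close> are used.\<close>
  have "\<forall>u\<in>I. \<kappa> u \<noteq> 0"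
    using frenet_wrtD(5)[OF alpha_frenet] by force
  then interpret mannheim_direction I \<kappa> TT NT BT \<kappa>T \<tau>T Tb Nb Bb \<kappa>b \<tau>b
    using I(1) tangent_frenet beta_frenet mannheim by unfold_locales
  note O = frenet_wrt_orthonormal[OF tangent_frenet s]
  have Tb_s: "Tb s = x s *\<^sub>R TT s + y s *\<^sub>R NT s + z s *\<^sub>R BT s"
    using Tb_def X_def s by simp
  have components: "Tb s \<bullet> TT s = x s" "Tb s \<bullet> NT s = y s" "z s = 0"
    using O tangent'_orthogonal_binormal[OF s] unfolding Tb_s by (simp_all add: inner_add_left)
  have unit: "(Tb s \<bullet> TT s)\<^sup>2 + (Tb s \<bullet> NT s)\<^sup>2 = 1"
    using xyz[rule_format, OF s] components by simp
  have "\<tau>T s * (Tb s \<bullet> NT s) \<noteq> 0"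
    using curvature'_eq[OF s] frenet_wrtD(5)[OF beta_frenet s] by (metis less_irrefl)
  with unit have factor:
    "(\<kappa>b s)\<^sup>2 / ((\<kappa>b s)\<^sup>2 + (\<tau>b s)\<^sup>2) powr (3/2) * (\<kappa>T s / (Tb s \<bullet> NT s)\<^sup>2) = \<kappa>T s / \<bar>\<tau>T s\<bar>"
    unfolding curvature'_eq[OF s] torsion'_eq[OF s] by (rule mannheim_curvature_factor)
  have "((\<lambda>u. \<tau>b u / \<kappa>b u) has_real_derivative \<kappa> s * (\<kappa>T s / (Tb s \<bullet> NT s)\<^sup>2)) (at s)"
    using has_real_derivative_torsion'_over_curvature'[OF s] by (simp add: unit)
  moreover have "\<tau>T s / \<kappa>T s = 1 / (\<kappa>T s / \<bar>\<tau>T s\<bar>) \<or> \<tau>T s / \<kappa>T s = - (1 / (\<kappa>T s / \<bar>\<tau>T s\<bar>))"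
    using frenet_wrtD(5)[OF tangent_frenet s] by (auto simp: abs_if)
  ultimately show ?thesis
    unfolding factor[symmetric] by blast
qed

end
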